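(* For a liner $X$ with $|X|>2$ the following are equivalent: (1) $X$ is Playfair; (2) $X$ is affine, $3$-regular and $3$-long; (3) for every line $L\subseteq X$ and point $x\in X\setminus L$ there exists a unique line $\Lambda$ such that $x\in\Lambda\subseteq\overline{L\cup\{x\}}\setminus L$.
   Context: A liner is a set $X$ of points with a family of subsets called lines such that any two distinct points lie in a unique line and every line contains at least two points. For distinct $x,y$, $\overline{xy}$ is the line through them and $\overline{xx}:=\{x\}$. A set is flat if it contains $\overline{xy}$ for all its distinct points; $\overline A$ is the smallest flat containing $A$; the rank $\|A\|$ is the smallest cardinality of $B\subseteq X$ with $A\subseteq\overline B$; a plane is a flat of rank 3. $X$ is Playfair if for every plane $P$, line $L\subseteq P$ and point $x\in P\setminus L$ there exists a unique line $\Lambda$ with $x\in\Lambda\subseteq P\setminus L$. $X$ is affine if for all $o,x,y\in X$ and $p\in\overline{xy}\setminus\overline{ox}$ there exists $u\in\overline{oy}$ such that for every $v\in\overline{oy}$: $u=v$ iff $\overline{vp}\cap\overline{ox}=\varnothing$. $X$ is $3$-regular if for every set $A\subseteq X$ with $|A|<3$ and points $o\in\overline A$, $p\in X\setminus\overline A$, we have $\overline{\{p\}\cup A}=\bigcup_{u\in\overline{op}}\bigcup_{a\in\overline A}\overline{ua}$. $X$ is $3$-long if every line has at least $3$ points. *)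

theory Defs
  imports "HOL-Library.Extended_Nat"
begin

definition liner :: "'a set \<Rightarrow> 'a set set \<Rightarrow> bool" where
  "liner X Ls \<longleftrightarrow>
     (\<forall>L\<in>Ls. L \<subseteq> X \<and> (\<exists>a b. a \<in> L \<and> b \<in> L \<and> a \<noteq> b)) \<and>
     (\<forall>x\<in>X. \<forall>y\<in>X. x \<noteq> y \<longrightarrow> (\<exists>!L. L \<in> Ls \<and> x \<in> L \<and> y \<in> L))"

definition line_through :: "'a set set \<Rightarrow> 'a \<Rightarrow> 'a \<Rightarrow> 'a set" where
  "line_through Ls x y = (if x = y then {x} else (THE L. L \<in> Ls \<and> x \<in> L \<and> y \<in> L))"

definition flat :: "'a set \<Rightarrow> 'a set set \<Rightarrow> 'a set \<Rightarrow> bool" where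
  "flat X Ls A \<longleftrightarrow> A \<subseteq> X \<and> (\<forall>x\<in>A. \<forall>y\<in>A. x \<noteq> y \<longrightarrow> line_through Ls x y \<subseteq> A)"

definition flat_hull :: "'a set \<Rightarrow> 'a set set \<Rightarrow> 'a set \<Rightarrow> 'a set" where
  "flat_hull X Ls A = \<Inter>{F. flat X Ls F \<and> A \<subseteq> F}"

definition rank :: "'a set \<Rightarrow> 'a set set \<Rightarrow> 'a set \<Rightarrow> enat" where
  "rank X Ls A =
     (if \<exists>B. B \<subseteq> X \<and> finite B \<and> A \<subseteq> flat_hull X Ls B
      then enat (LEAST n. \<exists>B. B \<subseteq> X \<and> finite B \<and> card B = n \<and> A \<subseteq> flat_hull X Ls B)
      else \<infinity>)"

definition plane :: "'a set \<Rightarrow> 'a set set \<Rightarrow> 'a set \<Rightarrow> bool" where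
  "plane X Ls P \<longleftrightarrow> flat X Ls P \<and> rank X Ls P = 3"

definition playfair :: "'a set \<Rightarrow> 'a set set \<Rightarrow> bool" where
  "playfair X Ls \<longleftrightarrow>
     (\<forall>P L x. plane X Ls P \<and> L \<in> Ls \<and> L \<subseteq> P \<and> x \<in> P - L \<longrightarrow>
        (\<exists>!\<Lambda>. \<Lambda> \<in> Ls \<and> x \<in> \<Lambda> \<and> \<Lambda> \<subseteq> P - L))"

definition affine_liner :: "'a set \<Rightarrow> 'a set set \<Rightarrow> bool" where
  "affine_liner X Ls \<longleftrightarrow>
     (\<forall>z\<in>X. \<forall>x\<in>X. \<forall>y\<in>X. \<forall>p \<in> line_through Ls x y - line_through Ls z x.
        \<exists>u\<in>line_through Ls z y. \<forall>v\<in>line_through Ls z y.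
          (u = v \<longleftrightarrow> line_through Ls v p \<inter> line_through Ls z x = {}))"

definition regular3 :: "'a set \<Rightarrow> 'a set set \<Rightarrow> bool" where
  "regular3 X Ls \<longleftrightarrow>
     (\<forall>A z p. A \<subseteq> X \<and> finite A \<and> card A < 3 \<and> z \<in> flat_hull X Ls A \<and>
        p \<in> X - flat_hull X Ls A \<longrightarrow>
        flat_hull X Ls (insert p A) =
          (\<Union>u\<in>line_through Ls z p. \<Union>a\<in>flat_hull X Ls A. line_through Ls u a))"

definition long3 :: "'a set set \<Rightarrow> bool" where
  "long3 Ls \<longleftrightarrow> (\<forall>L\<in>Ls. \<exists>a b c. a \<in> L \<and> b \<in> L \<and> c \<in> L \<and> a \<noteq> b \<and> a \<noteq> c \<and> b \<noteq> c)"

end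

(*
  The pivot is the local parallel axiom (3), in the equivalent form: for every noncollinear
  a, b, c there is exactly one line through c inside the flat hull H of {a, b, c} missing ab.
  It yields an exchange property (every point of H off ab spans H together with a and b),
  hence every noncollinear triple in H spans H, and parallels in H exist and are unique for
  arbitrary lines and points of H.  Affinity follows by intersecting the parallel with the
  other line; a two-point line would force a three-point plane without parallels, giving
  3-longness; and 3-regularity holds because, from a point off a line L, at most one of two
  lines joining it to L can be parallel to a given line.  Conversely, affinity and 3-longness
  produce a parallel, while 3-regularity (which also gives the exchange property) puts two
  candidate parallels on a common transversal, where the uniqueness clause of affinity
  applies.  Under the exchange property, planes are exactly the hulls of noncollinear triples,
  which identifies the Playfair property with (3).
*)

theory Submission
  imports Defs
begin

lemma line_through_commute: "line_through Ls x y = line_through Ls y x"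
proof -
  have "(\<lambda>L. L \<in> Ls \<and> x \<in> L \<and> y \<in> L) = (\<lambda>L. L \<in> Ls \<and> y \<in> L \<and> x \<in> L)" by auto
  then show ?thesis unfolding line_through_def by simp
qed

locale liner_geometry =
  fixes X :: "'a set" and Ls :: "'a set set"
  assumes liner: "liner X Ls"
begin

abbreviation line :: "'a \<Rightarrow> 'a \<Rightarrow> 'a set" where
  "line x y \<equiv> line_through Ls x y"

abbreviation fhull :: "'a set \<Rightarrow> 'a set" where
  "fhull A \<equiv> flat_hull X Ls A"

lemma line_subset_X: "L \<in> Ls \<Longrightarrow> L \<subseteq> X"
  using liner unfolding liner_def by (simp add: conjunct1)

lemma line_other_point:
  assumes "L \<in> Ls"
  obtains y where "y \<in> L" "y \<noteq> x"
proof -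
  have "\<exists>a b. a \<in> L \<and> b \<in> L \<and> a \<noteq> b" using liner assms unfolding liner_def by (simp add: conjunct1)
  then show thesis using that by blast
qed

lemma line_ex1: "x \<in> X \<Longrightarrow> y \<in> X \<Longrightarrow> x \<noteq> y \<Longrightarrow> \<exists>!L. L \<in> Ls \<and> x \<in> L \<and> y \<in> L"
  using liner unfolding liner_def by (simp add: conjunct2)

lemma line_through_in_Ls:
  assumes "x \<in> X" "y \<in> X" "x \<noteq> y"
  shows "line x y \<in> Ls"
  unfolding line_through_def using assms theI'[OF line_ex1[OF assms]] by simp

lemma line_through_unique:
  assumes "L \<in> Ls" "x \<in> L" "y \<in> L" "x \<noteq> y"
  shows "line x y = L"
proof -
  have "x \<in> X" "y \<in> X" using assms line_subset_X by auto
  then show ?thesis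
    unfolding line_through_def using the1_equality[OF line_ex1] assms by simp
qed

lemma left_mem_line: "x \<in> X \<Longrightarrow> y \<in> X \<Longrightarrow> x \<in> line x y"
  unfolding line_through_def using theI'[OF line_ex1, of x y] by auto

lemma right_mem_line: "x \<in> X \<Longrightarrow> y \<in> X \<Longrightarrow> y \<in> line x y"
  using left_mem_line[of y x] line_through_commute[of Ls x y] by simp

lemma line_through_refl [simp]: "line x x = {x}"
  by (simp add: line_through_def)

lemma line_through_subset_X: "x \<in> X \<Longrightarrow> y \<in> X \<Longrightarrow> line x y \<subseteq> X"
  using line_through_in_Ls line_subset_X by (cases "x = y") auto

lemma line_through_eq:
  assumes "x \<in> X" "y \<in> X" "u \<in> line x y" "v \<in> line x y" "u \<noteq> v"
  shows "line u v = line x y"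
  using assms line_through_in_Ls line_through_unique by (cases "x = y") auto

lemma lines_eq:
  assumes "L \<in> Ls" "M \<in> Ls" "u \<in> L" "v \<in> L" "u \<in> M" "v \<in> M" "u \<noteq> v"
  shows "L = M"
  using line_through_unique[OF assms(1,3,4,7)] line_through_unique[OF assms(2,5,6,7)] by simp

lemma lines_meet_once:
  assumes "a \<in> X" "b \<in> X" "c \<in> X" "c \<notin> line a b" "x \<in> line a b" "x \<in> line a c"
  shows "x = a"
proof (rule ccontr)
  assume "x \<noteq> a"
  then have "line a b = line a c"
    using line_through_eq[OF assms(1,2) left_mem_line assms(5)]
      line_through_eq[OF assms(1,3) left_mem_line assms(6)] assms(1-3) by simp
  then show False using assms(1,3,4) right_mem_line by simp
qed

lemma not_mem_line_through:
  assumes M: "M \<in> Ls" "p \<in> M" and t: "t \<in> M" "t \<noteq> p" and a: "a \<in> X" "p \<in> X" "a \<notin> M"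
  shows "t \<notin> line a p"
proof
  assume "t \<in> line a p"
  then have "M = line a p"
    using lines_eq[OF M(1) line_through_in_Ls[OF a(1,2)] M(2) t(1) right_mem_line[OF a(1,2)]] t(2) M(2) a(3)
    by auto
  then show False using a(3) left_mem_line[OF a(1,2)] by simp
qed

lemma flat_line_through:
  assumes "x \<in> X" "y \<in> X"
  shows "flat X Ls (line x y)"
  unfolding flat_def using line_through_subset_X[OF assms] line_through_eq[OF assms] by auto

lemma flat_Ls: "L \<in> Ls \<Longrightarrow> flat X Ls L"
  unfolding flat_def by (simp add: line_subset_X line_through_unique)

lemma flat_X: "flat X Ls X"
  unfolding flat_def using line_through_subset_X by auto

lemma flat_line_subset: "flat X Ls F \<Longrightarrow> u \<in> F \<Longrightarrow> v \<in> F \<Longrightarrow> line u v \<subseteq> F"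
  unfolding flat_def by (cases "u = v") auto

lemma flat_mem_of_collinear:
  assumes F: "flat X Ls F" and c: "c \<in> X" and yw: "y \<in> F" "w \<in> F" "w \<in> line c y" "w \<noteq> y"
  shows "c \<in> F"
proof -
  have yX: "y \<in> X" using F yw(1) unfolding flat_def by blast
  have "line y w = line c y"
    using line_through_eq[OF c yX right_mem_line[OF c yX] yw(3)] yw(4) by simp
  then show ?thesis using flat_line_subset[OF F yw(1,2)] left_mem_line[OF c yX] by blast
qed

lemma flat_fhull:
  assumes "A \<subseteq> X"
  shows "flat X Ls (fhull A)"
proof -
  have "fhull A \<subseteq> X" using flat_X assms unfolding flat_hull_def by blast
  moreover have "line x y \<subseteq> fhull A" if "x \<in> fhull A" "y \<in> fhull A" "x \<noteq> y" for x y
    using that unfolding flat_hull_def flat_def by blast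
  ultimately show ?thesis unfolding flat_def by blast
qed

lemma fhull_superset: "A \<subseteq> fhull A"
  unfolding flat_hull_def by blast

lemma fhull_least: "flat X Ls F \<Longrightarrow> A \<subseteq> F \<Longrightarrow> fhull A \<subseteq> F"
  unfolding flat_hull_def by blast

lemma fhull_subset_X: "A \<subseteq> X \<Longrightarrow> fhull A \<subseteq> X"
  using fhull_least[OF flat_X] .

lemma fhull_mono: "A \<subseteq> B \<Longrightarrow> B \<subseteq> X \<Longrightarrow> fhull A \<subseteq> fhull B"
  using fhull_least[OF flat_fhull, of B A] fhull_superset[of B] by blast

lemma fhull_line_subset:
  "A \<subseteq> X \<Longrightarrow> u \<in> fhull A \<Longrightarrow> v \<in> fhull A \<Longrightarrow> line u v \<subseteq> fhull A"
  using flat_line_subset[OF flat_fhull] .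

lemma fhull_empty: "fhull {} = {}"
  using fhull_least[of "{}" "{}"] unfolding flat_def by auto

lemma fhull_pair:
  assumes "x \<in> X" "y \<in> X"
  shows "fhull {x, y} = line x y"
proof
  show "fhull {x, y} \<subseteq> line x y"
    using fhull_least[OF flat_line_through[OF assms]] left_mem_line right_mem_line assms by simp
  show "line x y \<subseteq> fhull {x, y}"
    using fhull_line_subset[of "{x, y}" x y] fhull_superset[of "{x, y}"] assms by simp
qed

lemma fhull_singleton: "x \<in> X \<Longrightarrow> fhull {x} = {x}"
  using fhull_pair[of x x] by simp

lemma fhull_line_insert:
  assumes "a \<in> X" "b \<in> X" "x \<in> X"
  shows "fhull (line a b \<union> {x}) = fhull {a, b, x}"
proof
  have "line a b \<subseteq> fhull {a, b, x}"
    using fhull_line_subset[of "{a, b, x}" a b] fhull_superset[of "{a, b, x}"] assms by simp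
  then show "fhull (line a b \<union> {x}) \<subseteq> fhull {a, b, x}"
    using fhull_least[OF flat_fhull] fhull_superset[of "{a, b, x}"] assms by simp
  show "fhull {a, b, x} \<subseteq> fhull (line a b \<union> {x})"
    using fhull_mono[of "{a, b, x}"] line_through_subset_X[OF assms(1,2)]
      left_mem_line[OF assms(1,2)] right_mem_line[OF assms(1,2)] assms(3) by simp
qed

definition noncollinear :: "'a \<Rightarrow> 'a \<Rightarrow> 'a \<Rightarrow> bool" where
  "noncollinear a b c \<longleftrightarrow> a \<in> X \<and> b \<in> X \<and> c \<in> X \<and> a \<noteq> b \<and> c \<notin> line a b"

lemma noncollinearI: "a \<in> X \<Longrightarrow> b \<in> X \<Longrightarrow> c \<in> X \<Longrightarrow> a \<noteq> b \<Longrightarrow> c \<notin> line a b \<Longrightarrow> noncollinear a b c"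
  unfolding noncollinear_def by simp

lemma noncollinearD:
  assumes "noncollinear a b c"
  shows "a \<in> X" "b \<in> X" "c \<in> X" "a \<noteq> b" "c \<notin> line a b"
  using assms unfolding noncollinear_def by simp_all

lemma noncollinear_swap_12: "noncollinear a b c \<Longrightarrow> noncollinear b a c"
  unfolding noncollinear_def using line_through_commute[of Ls a b] by auto

lemma noncollinear_swap_23:
  assumes "noncollinear a b c"
  shows "noncollinear a c b"
proof (rule noncollinearI)
  note abc = noncollinearD[OF assms]
  show "a \<noteq> c" using abc left_mem_line by blast
  show "b \<notin> line a c"
  proof
    assume "b \<in> line a c"
    then have "line a b = line a c"
      using line_through_eq[OF abc(1,3) left_mem_line] abc(1,3,4) by simp
    then show False using abc(1,3,5) right_mem_line by simp
  qed
qed (use noncollinearD[OF assms] in simp_all)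

lemma noncollinear_permute:
  assumes "noncollinear a b c"
  shows "noncollinear b a c" "noncollinear a c b" "noncollinear b c a"
    "noncollinear c a b" "noncollinear c b a"
proof -
  show 1: "noncollinear b a c" using noncollinear_swap_12[OF assms] .
  show 2: "noncollinear a c b" using noncollinear_swap_23[OF assms] .
  show 3: "noncollinear b c a" using noncollinear_swap_23[OF 1] .
  show "noncollinear c a b" using noncollinear_swap_12[OF 2] .
  show "noncollinear c b a" using noncollinear_swap_12[OF 3] .
qed

lemma noncollinear_distinct: "noncollinear a b c \<Longrightarrow> a \<noteq> b \<and> a \<noteq> c \<and> b \<noteq> c"
  using noncollinear_permute(2,3) noncollinearD(4) by metis

lemma noncollinear_on_line:
  assumes "L \<in> Ls" "x \<in> X" "x \<notin> L"
  obtains a b where "line a b = L" "noncollinear a b x"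
proof -
  obtain a where a: "a \<in> L" using assms(1) line_other_point by blast
  obtain b where b: "b \<in> L" "b \<noteq> a" using assms(1) line_other_point by blast
  have "line a b = L" using line_through_unique[OF assms(1) a b(1)] b(2) by simp
  moreover have "noncollinear a b x"
    using noncollinearI a b line_subset_X[OF assms(1)] assms(2,3) calculation by blast
  ultimately show thesis using that by blast
qed

lemma vertices_mem_fhull: "a \<in> fhull {a, b, c}" "b \<in> fhull {a, b, c}" "c \<in> fhull {a, b, c}"
  using fhull_superset[of "{a, b, c}"] by auto

lemma noncollinear_subset_X: "noncollinear a b c \<Longrightarrow> {a, b, c} \<subseteq> X"
  using noncollinearD by blast

lemma noncollinear_fhull_subset_X: "noncollinear a b c \<Longrightarrow> fhull {a, b, c} \<subseteq> X"
  using fhull_subset_X[OF noncollinear_subset_X] .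

lemma noncollinear_line_subset_fhull:
  "noncollinear a b c \<Longrightarrow> u \<in> fhull {a, b, c} \<Longrightarrow> v \<in> fhull {a, b, c} \<Longrightarrow> line u v \<subseteq> fhull {a, b, c}"
  using fhull_line_subset[OF noncollinear_subset_X] .

lemma noncollinear_side_subset_fhull:
  assumes "noncollinear a b c"
  shows "line a b \<subseteq> fhull {a, b, c}" "line a c \<subseteq> fhull {a, b, c}" "line b c \<subseteq> fhull {a, b, c}"
  using noncollinear_line_subset_fhull[OF assms] vertices_mem_fhull by simp_all

lemma noncollinear_fhull_least:
  "noncollinear a b c \<Longrightarrow> {p, q, r} \<subseteq> fhull {a, b, c} \<Longrightarrow> fhull {p, q, r} \<subseteq> fhull {a, b, c}"
  using fhull_least[OF flat_fhull[OF noncollinear_subset_X]] .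

lemma noncollinear_replace_vertex:
  assumes "noncollinear a b c" "d \<in> fhull {a, b, c}" "d \<notin> line a b"
  shows "noncollinear a b d"
  using noncollinearI noncollinearD[OF assms(1)] noncollinear_fhull_subset_X[OF assms(1)] assms(2,3)
  by blast

section \<open>Exchange and parallels in planes\<close>

lemma regular3_decompose:
  assumes R: "regular3 X Ls" and nc: "noncollinear a b c" and z: "z \<in> line a b"
    and y: "y \<in> fhull {a, b, c}"
  shows "\<exists>u \<in> line z c. \<exists>w \<in> line a b. y \<in> line u w"
proof -
  note abc = noncollinearD[OF nc]
  have ab: "fhull {a, b} = line a b" using fhull_pair abc by simp
  then have "fhull (insert c {a, b}) = (\<Union>u\<in>line z c. \<Union>w\<in>line a b. line u w)"
    using R abc z unfolding regular3_def by (simp del: insert_commute)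
  then show ?thesis using y by (auto simp: insert_commute)
qed

definition plane_exchange :: bool where
  "plane_exchange \<longleftrightarrow> (\<forall>a b c d. noncollinear a b c \<longrightarrow> d \<in> fhull {a, b, c} \<longrightarrow> d \<notin> line a b \<longrightarrow>
     fhull {a, b, d} = fhull {a, b, c})"

lemma plane_exchangeD:
  "plane_exchange \<Longrightarrow> noncollinear a b c \<Longrightarrow> d \<in> fhull {a, b, c} \<Longrightarrow> d \<notin> line a b \<Longrightarrow>
    fhull {a, b, d} = fhull {a, b, c}"
  unfolding plane_exchange_def by blast

lemma fhull_exchange_if_mem:
  assumes nc: "noncollinear a b c" and d: "d \<in> fhull {a, b, c}" "d \<notin> line a b"
    and c: "c \<in> fhull {a, b, d}"
  shows "fhull {a, b, d} = fhull {a, b, c}"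
  using noncollinear_fhull_least[OF nc] noncollinear_fhull_least[OF noncollinear_replace_vertex[OF nc d]]
    vertices_mem_fhull c d(1) by (simp add: subset_antisym)

lemma regular3_exchange:
  assumes R: "regular3 X Ls"
  shows plane_exchange
  unfolding plane_exchange_def
proof (intro allI impI)
  fix a b c d assume nc: "noncollinear a b c" and d: "d \<in> fhull {a, b, c}" "d \<notin> line a b"
  note abc = noncollinearD[OF nc]
  have ncd: "noncollinear a b d" using noncollinear_replace_vertex[OF nc d] .
  let ?Q = "fhull {a, b, d}"
  obtain u w where u: "u \<in> line a c" and w: "w \<in> line a b" and duw: "d \<in> line u w"
    using regular3_decompose[OF R nc left_mem_line[OF abc(1,2)] d(1)] by blast
  have uX: "u \<in> X" and wX: "w \<in> X" using u w line_through_subset_X abc by blast+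
  have "u \<noteq> a"
    using duw d(2) flat_line_subset[OF flat_line_through[OF abc(1,2)] left_mem_line[OF abc(1,2)] w]
    by blast
  have wQ: "w \<in> ?Q" using noncollinear_side_subset_fhull[OF ncd] w by blast
  have "line d w = line u w"
    using line_through_eq[OF uX wX duw right_mem_line[OF uX wX]] w d(2) by auto
  then have "u \<in> ?Q"
    using noncollinear_line_subset_fhull[OF ncd vertices_mem_fhull(3) wQ] left_mem_line[OF uX wX] by auto
  then have "line a u \<subseteq> ?Q" using noncollinear_line_subset_fhull[OF ncd] vertices_mem_fhull by blast
  moreover have "line a u = line a c"
    using line_through_eq[OF abc(1,3) left_mem_line[OF abc(1,3)] u] \<open>u \<noteq> a\<close> by simp
  ultimately show "?Q = fhull {a, b, c}"
    using fhull_exchange_if_mem[OF nc d] right_mem_line[OF abc(1,3)] by blast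
qed

definition triangle_playfair :: bool where
  "triangle_playfair \<longleftrightarrow> (\<forall>a b c. noncollinear a b c \<longrightarrow>
     (\<exists>!\<Lambda>. \<Lambda> \<in> Ls \<and> c \<in> \<Lambda> \<and> \<Lambda> \<subseteq> fhull {a, b, c} - line a b))"

lemma triangle_playfair_iff_parallels:
  "triangle_playfair \<longleftrightarrow>
     (\<forall>L\<in>Ls. \<forall>x\<in>X - L. \<exists>!\<Lambda>. \<Lambda> \<in> Ls \<and> x \<in> \<Lambda> \<and> \<Lambda> \<subseteq> fhull (L \<union> {x}) - L)"
proof
  assume T: triangle_playfair
  show "\<forall>L\<in>Ls. \<forall>x\<in>X - L. \<exists>!\<Lambda>. \<Lambda> \<in> Ls \<and> x \<in> \<Lambda> \<and> \<Lambda> \<subseteq> fhull (L \<union> {x}) - L"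
  proof (intro ballI)
    fix L x assume "L \<in> Ls" "x \<in> X - L"
    then obtain a b where ab: "line a b = L" "noncollinear a b x"
      using noncollinear_on_line by blast
    then show "\<exists>!\<Lambda>. \<Lambda> \<in> Ls \<and> x \<in> \<Lambda> \<and> \<Lambda> \<subseteq> fhull (L \<union> {x}) - L"
      using T fhull_line_insert noncollinearD(1-3)[OF ab(2)] unfolding triangle_playfair_def by metis
  qed
next
  assume P: "\<forall>L\<in>Ls. \<forall>x\<in>X - L. \<exists>!\<Lambda>. \<Lambda> \<in> Ls \<and> x \<in> \<Lambda> \<and> \<Lambda> \<subseteq> fhull (L \<union> {x}) - L"
  show triangle_playfair
    unfolding triangle_playfair_def
  proof (intro allI impI)
    fix a b c assume nc: "noncollinear a b c"
    note abc = noncollinearD[OF nc]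
    have "line a b \<in> Ls" "c \<in> X - line a b" using line_through_in_Ls abc by simp_all
    then show "\<exists>!\<Lambda>. \<Lambda> \<in> Ls \<and> c \<in> \<Lambda> \<and> \<Lambda> \<subseteq> fhull {a, b, c} - line a b"
      using P fhull_line_insert[OF abc(1-3)] by (metis Un_insert_right sup_bot.right_neutral)
  qed
qed

lemma triangle_playfair_unique:
  assumes "triangle_playfair" "noncollinear a b c"
    and "M \<in> Ls" "c \<in> M" "M \<subseteq> fhull {a, b, c}" "M \<inter> line a b = {}"
    and "N \<in> Ls" "c \<in> N" "N \<subseteq> fhull {a, b, c}" "N \<inter> line a b = {}"
  shows "M = N"
proof -
  have "\<exists>!\<Lambda>. \<Lambda> \<in> Ls \<and> c \<in> \<Lambda> \<and> \<Lambda> \<subseteq> fhull {a, b, c} - line a b"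
    using assms(1,2) unfolding triangle_playfair_def by blast
  moreover have "M \<subseteq> fhull {a, b, c} - line a b" "N \<subseteq> fhull {a, b, c} - line a b"
    using assms(5,6,9,10) by blast+
  ultimately show ?thesis using assms(3,4,7,8) by blast
qed

lemma triangle_playfair_exchange:
  assumes T: triangle_playfair
  shows plane_exchange
  unfolding plane_exchange_def
proof (intro allI impI)
  fix a b c d assume nc: "noncollinear a b c" and d: "d \<in> fhull {a, b, c}" "d \<notin> line a b"
  note abc = noncollinearD[OF nc]
  let ?H = "fhull {a, b, c}" and ?Q = "fhull {a, b, d}" and ?L = "line a b"
  have ncd: "noncollinear a b d" using noncollinear_replace_vertex[OF nc d] .
  have QH: "?Q \<subseteq> ?H" using noncollinear_fhull_least[OF nc] vertices_mem_fhull d(1) by simp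
  have LQ: "?L \<subseteq> ?Q" using noncollinear_side_subset_fhull[OF ncd] by simp
  have meets: "c \<in> ?Q" if y: "y \<in> ?Q" "y \<notin> ?L" "line c y \<inter> ?L \<noteq> {}" for y
    using flat_mem_of_collinear[OF flat_fhull[OF noncollinear_subset_X[OF ncd]] abc(3) y(1)] y(2,3) LQ
    by blast
  \<comment> \<open>Otherwise the lines from c to d and to a second point y of the parallel to ab through d
    in Q both miss ab, so they coincide, and that parallel dy contains c.\<close>
  have "c \<in> ?Q"
  proof (rule ccontr)
    assume cQ: "c \<notin> ?Q"
    have dX: "d \<in> X" using noncollinearD(3)[OF ncd] .
    have "c \<noteq> d" using cQ vertices_mem_fhull by blast
    obtain \<Lambda> where \<Lambda>: "\<Lambda> \<in> Ls" "d \<in> \<Lambda>" "\<Lambda> \<subseteq> ?Q - ?L"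
      using T ncd unfolding triangle_playfair_def by blast
    obtain y where y: "y \<in> \<Lambda>" "y \<noteq> d" using line_other_point[OF \<Lambda>(1)] by blast
    have yQ: "y \<in> ?Q" "y \<notin> ?L" using y \<Lambda> by auto
    have yX: "y \<in> X" using y \<Lambda>(1) line_subset_X by blast
    have "c \<noteq> y" using cQ yQ by blast
    have yH: "y \<in> ?H" using yQ(1) QH by blast
    have "line c y \<in> Ls" "line c d \<in> Ls"
      using line_through_in_Ls abc(3) yX dX \<open>c \<noteq> y\<close> \<open>c \<noteq> d\<close> by auto
    moreover have "line c y \<subseteq> ?H" "line c d \<subseteq> ?H"
      using noncollinear_line_subset_fhull[OF nc vertices_mem_fhull(3)] yH d(1) by auto
    moreover have "line c y \<inter> ?L = {}" "line c d \<inter> ?L = {}"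
      using meets[OF yQ] meets[OF vertices_mem_fhull(3) d(2)] cQ by auto
    ultimately have "line c y = line c d"
      using triangle_playfair_unique[OF T nc] left_mem_line[OF abc(3)] yX dX by blast
    then have "y \<in> line c d" using right_mem_line[OF abc(3) yX] by simp
    then have "line d y = line c d"
      using line_through_eq[OF abc(3) dX right_mem_line[OF abc(3) dX]] y(2) by metis
    moreover have "line d y = \<Lambda>" using line_through_unique[OF \<Lambda>(1,2) y(1)] y(2) by simp
    ultimately show False using \<Lambda>(3) cQ left_mem_line[OF abc(3) dX] by blast
  qed
  then show "?Q = ?H" using fhull_exchange_if_mem[OF nc d] by blast
qed

lemma noncollinear_through_point:
  assumes E: plane_exchange and nc: "noncollinear a b c" and p: "p \<in> fhull {a, b, c}"
  obtains b' c' where "noncollinear p b' c'" "fhull {p, b', c'} = fhull {a, b, c}"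
proof (cases "p \<in> line b c")
  case False
  note abc = noncollinearD[OF nc]
  have pX: "p \<in> X" using p noncollinear_fhull_subset_X[OF nc] by blast
  have "fhull {b, c, p} = fhull {b, c, a}"
    using plane_exchangeD[OF E noncollinear_permute(3)[OF nc] _ False] p by (simp add: insert_commute)
  moreover have "noncollinear p b c"
    using noncollinear_permute(4)[OF noncollinearI[OF abc(2,3) pX _ False]] noncollinear_distinct[OF nc]
    by simp
  ultimately show thesis using that by (simp add: insert_commute)
next
  case True
  note abc = noncollinearD[OF nc]
  show thesis
  proof (cases "p = b")
    case True
    then show thesis using that noncollinear_permute(1)[OF nc] by (simp add: insert_commute)
  next
    case False
    have pX: "p \<in> X" using p noncollinear_fhull_subset_X[OF nc] by blast
    have "p \<notin> line a b"
      using lines_meet_once[OF abc(2,1,3)] noncollinearD(5)[OF noncollinear_permute(1)[OF nc]]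
        True False line_through_commute[of Ls a b] by metis
    then have "fhull {a, b, p} = fhull {a, b, c}" "noncollinear p a b"
      using plane_exchangeD[OF E nc p] noncollinear_permute(4)[OF noncollinearI[OF abc(1,2) pX abc(4)]]
      by simp_all
    then show thesis using that by (simp add: insert_commute)
  qed
qed

lemma noncollinear_through_two_points:
  assumes E: plane_exchange and nc: "noncollinear p b c" and q: "q \<in> fhull {p, b, c}" "q \<noteq> p"
  obtains c' where "noncollinear p q c'" "fhull {p, q, c'} = fhull {p, b, c}"
proof (cases "q \<in> line p c")
  case False
  note pbc = noncollinearD[OF nc]
  have qX: "q \<in> X" using q noncollinear_fhull_subset_X[OF nc] by blast
  have "fhull {p, c, q} = fhull {p, c, b}"
    using plane_exchangeD[OF E noncollinear_permute(2)[OF nc] _ False] q by (simp add: insert_commute)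
  moreover have "noncollinear p q c"
    using noncollinear_permute(2)[OF noncollinearI[OF pbc(1,3) qX _ False]] noncollinear_distinct[OF nc]
    by simp
  ultimately show thesis using that by (simp add: insert_commute)
next
  case True
  note pbc = noncollinearD[OF nc]
  have qX: "q \<in> X" using q noncollinear_fhull_subset_X[OF nc] by blast
  have "q \<notin> line p b" using lines_meet_once[OF pbc(1-3,5)] True q(2) by blast
  then have "fhull {p, b, q} = fhull {p, b, c}" "noncollinear p q b"
    using plane_exchangeD[OF E nc q(1)] noncollinear_permute(2)[OF noncollinearI[OF pbc(1,2) qX pbc(4)]]
    by simp_all
  then show thesis using that by (simp add: insert_commute)
qed

lemma fhull_noncollinear_eq:
  assumes E: plane_exchange and nc: "noncollinear a b c" and pqr: "noncollinear p q r"
    and "p \<in> fhull {a, b, c}" "q \<in> fhull {a, b, c}" "r \<in> fhull {a, b, c}"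
  shows "fhull {p, q, r} = fhull {a, b, c}"
proof -
  obtain b' c' where 1: "noncollinear p b' c'" "fhull {p, b', c'} = fhull {a, b, c}"
    using noncollinear_through_point[OF E nc assms(4)] .
  obtain c'' where 2: "noncollinear p q c''" "fhull {p, q, c''} = fhull {p, b', c'}"
    using noncollinear_through_two_points[OF E 1(1), of q] assms(5) 1(2) noncollinear_distinct[OF pqr]
    by auto
  have "fhull {p, q, r} = fhull {p, q, c''}"
    using plane_exchangeD[OF E 2(1), of r] assms(6) 1(2) 2(2) noncollinearD(5)[OF pqr] by simp
  then show ?thesis using 1 2 by simp
qed

lemma parallel_ex1:
  assumes T: triangle_playfair and nc: "noncollinear a b c"
    and L: "L \<in> Ls" "L \<subseteq> fhull {a, b, c}" and x: "x \<in> fhull {a, b, c}" "x \<notin> L"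
  shows "\<exists>!\<Lambda>. \<Lambda> \<in> Ls \<and> x \<in> \<Lambda> \<and> \<Lambda> \<subseteq> fhull {a, b, c} - L"
proof -
  have "x \<in> X" using x noncollinear_fhull_subset_X[OF nc] by blast
  then obtain l1 l2 where l: "line l1 l2 = L" "noncollinear l1 l2 x"
    using noncollinear_on_line L(1) x(2) by blast
  have "l1 \<in> L" "l2 \<in> L"
    using l left_mem_line right_mem_line noncollinearD(1,2)[OF l(2)] by blast+
  then have "fhull {l1, l2, x} = fhull {a, b, c}"
    using fhull_noncollinear_eq[OF triangle_playfair_exchange[OF T] nc l(2)] L(2) x(1) by blast
  then show ?thesis using T l unfolding triangle_playfair_def by metis
qed

lemma parallel_exists:
  assumes "triangle_playfair" "noncollinear a b c"
    and "L \<in> Ls" "L \<subseteq> fhull {a, b, c}" "x \<in> fhull {a, b, c}" "x \<notin> L"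
  obtains \<Lambda> where "\<Lambda> \<in> Ls" "x \<in> \<Lambda>" "\<Lambda> \<subseteq> fhull {a, b, c}" "\<Lambda> \<inter> L = {}"
  using parallel_ex1[OF assms] by blast

lemma parallel_unique:
  assumes "triangle_playfair" "noncollinear a b c" "L \<in> Ls" "L \<subseteq> fhull {a, b, c}"
    and "M \<in> Ls" "x \<in> M" "M \<subseteq> fhull {a, b, c}" "M \<inter> L = {}"
    and "N \<in> Ls" "x \<in> N" "N \<subseteq> fhull {a, b, c}" "N \<inter> L = {}"
  shows "M = N"
proof -
  have "x \<in> fhull {a, b, c}" "x \<notin> L" using assms(6-8) by blast+
  then have "\<exists>!\<Lambda>. \<Lambda> \<in> Ls \<and> x \<in> \<Lambda> \<and> \<Lambda> \<subseteq> fhull {a, b, c} - L"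
    using parallel_ex1[OF assms(1-4)] by blast
  moreover have "M \<subseteq> fhull {a, b, c} - L" "N \<subseteq> fhull {a, b, c} - L"
    using assms(7,8,11,12) by blast+
  ultimately show ?thesis using assms(5,6,9,10) by blast
qed

lemma parallel_meets_crossing_line:
  assumes T: triangle_playfair and nc: "noncollinear a b c"
    and K: "K \<in> Ls" "K \<subseteq> fhull {a, b, c}" and N: "N \<in> Ls" "N \<subseteq> fhull {a, b, c}"
    and z: "z \<in> K" "z \<in> N" and "K \<noteq> N"
    and \<Lambda>: "\<Lambda> \<in> Ls" "\<Lambda> \<subseteq> fhull {a, b, c}" "\<Lambda> \<inter> K = {}"
  shows "\<Lambda> \<inter> N \<noteq> {}"
  using parallel_unique[OF T nc \<Lambda>(1,2) K(1) z(1) K(2) _ N(1) z(2) N(2)] \<Lambda>(3) \<open>K \<noteq> N\<close> by blast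

lemma join_meets_line:
  assumes T: triangle_playfair and nc: "noncollinear a b c"
    and K: "K \<in> Ls" "K \<subseteq> fhull {a, b, c}" and L: "L \<in> Ls" "L \<subseteq> fhull {a, b, c}"
    and y: "y \<in> fhull {a, b, c}" "y \<notin> L" and w: "w1 \<in> L" "w2 \<in> L" "w1 \<noteq> w2"
  obtains w where "w \<in> {w1, w2}" "line y w \<inter> K \<noteq> {}"
proof (rule ccontr)
  assume "\<not> thesis"
  then have disj: "line y w1 \<inter> K = {}" "line y w2 \<inter> K = {}" using that by auto
  have yX: "y \<in> X" and wX: "w1 \<in> X" "w2 \<in> X"
    using y(1) noncollinear_fhull_subset_X[OF nc] w(1,2) L(1) line_subset_X by blast+
  have in_Ls: "line y w1 \<in> Ls" "line y w2 \<in> Ls" using line_through_in_Ls yX wX y(2) w by metis+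
  have in_H: "line y w1 \<subseteq> fhull {a, b, c}" "line y w2 \<subseteq> fhull {a, b, c}"
    using noncollinear_line_subset_fhull[OF nc y(1)] L(2) w(1,2) by auto
  have "line y w1 = line y w2"
    using parallel_unique[OF T nc K in_Ls(1) left_mem_line[OF yX wX(1)] in_H(1) disj(1)
        in_Ls(2) left_mem_line[OF yX wX(2)] in_H(2) disj(2)] .
  then have "line y w1 = L"
    using lines_eq[OF in_Ls(1) L(1) right_mem_line[OF yX wX(1)] _ w(1,2,3)] right_mem_line[OF yX wX(2)]
    by simp
  then show False using y(2) left_mem_line[OF yX wX(1)] by simp
qed

section \<open>The parallel axiom implies affinity, 3-longness and 3-regularity\<close>

lemma affine_witness_on_line:
  assumes X: "z \<in> X" "x \<in> X" "y \<in> X" and p: "p \<in> line z y" "p \<notin> line z x"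
  shows "\<forall>v\<in>line z y. (p = v \<longleftrightarrow> line v p \<inter> line z x = {})"
proof
  fix v assume v: "v \<in> line z y"
  have "v \<noteq> p \<Longrightarrow> line v p = line z y" using line_through_eq[OF X(1,3) v p(1)] by simp
  then show "(p = v) = (line v p \<inter> line z x = {})"
    using p(2) left_mem_line[OF X(1,2)] left_mem_line[OF X(1,3)] by (cases "v = p") auto
qed

lemma triangle_playfair_affine_witness:
  assumes T: triangle_playfair and nc: "noncollinear z x y"
    and p: "p \<in> fhull {z, x, y}" "p \<notin> line z x" "p \<notin> line z y"
  shows "\<exists>u\<in>line z y. \<forall>v\<in>line z y. (u = v \<longleftrightarrow> line v p \<inter> line z x = {})"
proof -
  note zxy = noncollinearD[OF nc]
  let ?H = "fhull {z, x, y}" and ?K = "line z x" and ?N = "line z y"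
  have K: "?K \<in> Ls" "?K \<subseteq> ?H" and N: "?N \<in> Ls" "?N \<subseteq> ?H"
    using line_through_in_Ls zxy noncollinear_distinct[OF nc] noncollinear_side_subset_fhull[OF nc] by auto
  have pX: "p \<in> X" using p(1) noncollinear_fhull_subset_X[OF nc] by blast
  obtain \<Lambda> where \<Lambda>: "\<Lambda> \<in> Ls" "p \<in> \<Lambda>" "\<Lambda> \<subseteq> ?H" "\<Lambda> \<inter> ?K = {}"
    using parallel_exists[OF T nc K p(1,2)] .
  have "?K \<noteq> ?N" using zxy(5) right_mem_line[OF zxy(1,3)] by auto
  then obtain u where u: "u \<in> \<Lambda>" "u \<in> ?N"
    using parallel_meets_crossing_line[OF T nc K N left_mem_line left_mem_line _ \<Lambda>(1,3,4)] zxy by blast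
  have "line u p = \<Lambda>" using line_through_unique[OF \<Lambda>(1) u(1) \<Lambda>(2)] u(2) p(3) by blast
  show ?thesis
  proof (intro bexI[OF _ u(2)] ballI iffI)
    fix v assume "v \<in> ?N" "u = v"
    then show "line v p \<inter> ?K = {}" using \<open>line u p = \<Lambda>\<close> \<Lambda>(4) by blast
  next
    fix v assume v: "v \<in> ?N" and disj: "line v p \<inter> ?K = {}"
    have vX: "v \<in> X" using v line_through_subset_X zxy by blast
    have "v \<noteq> p" using v p(3) by blast
    then have "line v p = \<Lambda>"
      using parallel_unique[OF T nc K line_through_in_Ls[OF vX pX] right_mem_line[OF vX pX]
          noncollinear_line_subset_fhull[OF nc _ p(1)] disj \<Lambda>(1,2,3)] v N(2) \<Lambda>(4)
      by (blast intro: Int_commute[THEN trans])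
    then have "v \<in> \<Lambda>" using left_mem_line[OF vX pX] by simp
    then show "u = v" using lines_eq[OF \<Lambda>(1) N(1) u(1) _ u(2) v] \<Lambda>(2) p(3) by blast
  qed
qed

lemma triangle_playfair_affine:
  assumes T: triangle_playfair
  shows "affine_liner X Ls"
  unfolding affine_liner_def
proof (intro ballI)
  fix z x y p assume X: "z \<in> X" "x \<in> X" "y \<in> X" and "p \<in> line x y - line z x"
  then have p: "p \<in> line x y" "p \<notin> line z x" by simp_all
  show "\<exists>u\<in>line z y. \<forall>v\<in>line z y. (u = v) = (line v p \<inter> line z x = {})"
  proof (cases "p \<in> line z y")
    case True
    then show ?thesis using affine_witness_on_line[OF X True p(2)] by blast
  next
    case False
    have "z \<noteq> x" using False p(1) by auto
    have "y \<notin> line z x"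
      using line_through_eq[OF X(1,2) right_mem_line[OF X(1,2)], of y] p left_mem_line[OF X(2,3)]
      by (cases "x = y") auto
    then have nc: "noncollinear z x y" using noncollinearI[OF X \<open>z \<noteq> x\<close>] by simp
    then show ?thesis
      using triangle_playfair_affine_witness[OF T nc _ p(2) False] p(1)
        noncollinear_side_subset_fhull(3)[OF nc] by blast
  qed
qed

lemma exists_third_point:
  assumes "infinite X \<or> card X > 2"
  obtains c where "c \<in> X" "c \<noteq> a" "c \<noteq> b"
proof -
  have "card {a, b} \<le> 2" by (cases "a = b") auto
  then have "\<not> X \<subseteq> {a, b}" using assms finite_subset card_mono[of "{a, b}" X] by fastforce
  then show thesis using that by blast
qed

lemma triangle_playfair_two_point_line:
  assumes T: triangle_playfair and nc: "noncollinear a b c" and ab: "line a b \<subseteq> {a, b}"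
  shows "line a c \<subseteq> {a, c}"
proof
  fix y assume yK: "y \<in> line a c"
  note abc = noncollinearD[OF nc]
  let ?H = "fhull {a, b, c}" and ?L = "line a b" and ?K = "line a c"
  have L: "?L \<in> Ls" "?L \<subseteq> ?H" and K: "?K \<in> Ls" "?K \<subseteq> ?H"
    using line_through_in_Ls abc noncollinear_distinct[OF nc] noncollinear_side_subset_fhull[OF nc]
    by auto
  have aK: "a \<in> ?K" "c \<in> ?K" using left_mem_line right_mem_line abc by auto
  have "b \<notin> ?K" using noncollinearD(5)[OF noncollinear_permute(2)[OF nc]] .
  then obtain M where M: "M \<in> Ls" "b \<in> M" "M \<subseteq> ?H" "M \<inter> ?K = {}"
    using parallel_exists[OF T nc K vertices_mem_fhull(2)] by blast
  obtain e where e: "e \<in> M" "e \<noteq> b" using line_other_point[OF M(1)] by blast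
  have eH: "e \<in> ?H" and eK: "e \<notin> ?K" using e M by auto
  have eX: "e \<in> X" using e(1) M(1) line_subset_X by blast
  \<comment> \<open>Such a line through a would be K, and through b it would be M.\<close>
  have par: "line e t \<inter> ?L = {}" if t: "t \<in> ?K" "t \<noteq> a" for t
  proof -
    have tX: "t \<in> X" using t(1) line_through_subset_X abc by blast
    have "a \<notin> line e t"
      using lines_eq[OF line_through_in_Ls[OF eX tX] K(1) _ right_mem_line[OF eX tX] aK(1) t(1)] t(2)
        eK left_mem_line[OF eX tX] by force
    moreover have "b \<notin> line e t"
    proof
      assume "b \<in> line e t"
      then have "line e t = M"
        using line_through_unique[OF M(1,2) e(1)] line_through_eq[OF eX tX _ left_mem_line[OF eX tX]] e(2)
        by metis
      then show False using right_mem_line[OF eX tX] t(1) M(4) by blast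
    qed
    ultimately show ?thesis using ab by blast
  qed
  show "y \<in> {a, c}"
  proof (rule ccontr)
    assume y: "y \<notin> {a, c}"
    obtain t where "t \<in> {c, y}" "line e t \<inter> ?L \<noteq> {}"
      using join_meets_line[OF T nc L K eH eK aK(2) yK] y by blast
    then show False using par aK(2) yK y noncollinear_distinct[OF nc] by blast
  qed
qed

lemma triangle_playfair_long3:
  assumes T: triangle_playfair and big: "infinite X \<or> card X > 2"
  shows "long3 Ls"
  unfolding long3_def
proof
  fix L assume L: "L \<in> Ls"
  show "\<exists>a b c. a \<in> L \<and> b \<in> L \<and> c \<in> L \<and> a \<noteq> b \<and> a \<noteq> c \<and> b \<noteq> c"
  proof (rule ccontr)
    assume short: "\<not> ?thesis"
    obtain a where a: "a \<in> L" using line_other_point[OF L] by blast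
    obtain b where b: "b \<in> L" "b \<noteq> a" using line_other_point[OF L] by blast
    have ab: "line a b = L" using line_through_unique[OF L a b(1)] b(2) by simp
    have abX: "a \<in> X" "b \<in> X" using a b L line_subset_X by auto
    have Lab: "line a b \<subseteq> {a, b}" using short a b ab by blast
    obtain c where c: "c \<in> X" "c \<noteq> a" "c \<noteq> b" using exists_third_point[OF big] by blast
    have nc: "noncollinear a b c" using noncollinearI[OF abX c(1)] Lab b(2) c by blast
    have "line a c \<subseteq> {a, c}" using triangle_playfair_two_point_line[OF T nc Lab] .
    moreover have "line b c \<subseteq> {b, c}"
      using triangle_playfair_two_point_line[OF T noncollinear_permute(1)[OF nc]] Lab
      by (simp add: line_through_commute insert_commute)
    ultimately have "flat X Ls {a, b, c}"
      unfolding flat_def using Lab abX c(1) by (auto simp: line_through_commute)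
    then have H: "fhull {a, b, c} \<subseteq> {a, b, c}" using fhull_least by blast
    obtain \<Lambda> where \<Lambda>: "\<Lambda> \<in> Ls" "c \<in> \<Lambda>" "\<Lambda> \<subseteq> fhull {a, b, c}" "\<Lambda> \<inter> line a b = {}"
      using parallel_exists[OF T nc line_through_in_Ls[OF abX b(2)[symmetric]]
          noncollinear_side_subset_fhull(1)[OF nc] vertices_mem_fhull(3) noncollinearD(5)[OF nc]] .
    obtain d where "d \<in> \<Lambda>" "d \<noteq> c" using line_other_point[OF \<Lambda>(1)] by blast
    then show False using \<Lambda>(3,4) H left_mem_line[OF abX] right_mem_line[OF abX] by blast
  qed
qed

lemma long3_third_point:
  assumes "long3 Ls" "L \<in> Ls"
  obtains c where "c \<in> L" "c \<noteq> a" "c \<noteq> b"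
proof -
  obtain x y z where "x \<in> L" "y \<in> L" "z \<in> L" "x \<noteq> y" "x \<noteq> z" "y \<noteq> z"
    using assms unfolding long3_def by blast
  then show thesis using that by metis
qed

lemma joins_subset_fhull_insert:
  assumes A: "A \<subseteq> X" and z: "z \<in> fhull A" and p: "p \<in> X"
  shows "(\<Union>u\<in>line z p. \<Union>a\<in>fhull A. line u a) \<subseteq> fhull (insert p A)"
proof -
  have iA: "insert p A \<subseteq> X" using A p by simp
  have sub: "fhull A \<subseteq> fhull (insert p A)" using fhull_mono[OF _ iA] by blast
  have "p \<in> fhull (insert p A)" using fhull_superset by blast
  then have "line z p \<subseteq> fhull (insert p A)" using fhull_line_subset[OF iA] z sub by blast
  then show ?thesis using fhull_line_subset[OF iA] sub by blast
qed

lemma triangle_playfair_join_cover: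
  assumes T: triangle_playfair and Lg: "long3 Ls" and nc: "noncollinear a b p"
    and z: "z \<in> line a b" and y: "y \<in> fhull {a, b, p}"
  shows "\<exists>u\<in>line z p. \<exists>w\<in>line a b. y \<in> line u w"
proof (cases "y \<in> line a b")
  case True
  note abp = noncollinearD[OF nc]
  have "z \<in> X" "y \<in> X" using z True line_through_subset_X abp by blast+
  then show ?thesis using True left_mem_line[OF _ abp(3)] right_mem_line by blast
next
  case False
  note abp = noncollinearD[OF nc]
  let ?H = "fhull {a, b, p}" and ?L = "line a b" and ?K = "line z p"
  have zX: "z \<in> X" using z line_through_subset_X abp by blast
  have yX: "y \<in> X" using y noncollinear_fhull_subset_X[OF nc] by blast
  have "z \<noteq> p" using z abp(5) by blast
  have zH: "z \<in> ?H" using z noncollinear_side_subset_fhull(1)[OF nc] by blast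
  have L: "?L \<in> Ls" "?L \<subseteq> ?H" and K: "?K \<in> Ls" "?K \<subseteq> ?H"
    using line_through_in_Ls abp zX \<open>z \<noteq> p\<close> noncollinear_side_subset_fhull(1)[OF nc]
      noncollinear_line_subset_fhull[OF nc zH vertices_mem_fhull(3)] by auto
  obtain w1 where w1: "w1 \<in> ?L" "w1 \<noteq> z" using line_other_point[OF L(1)] by blast
  obtain w2 where w2: "w2 \<in> ?L" "w2 \<noteq> z" "w2 \<noteq> w1" using long3_third_point[OF Lg L(1)] by blast
  obtain w u where w: "w \<in> ?L" "w \<noteq> z" and u: "u \<in> line y w" "u \<in> ?K"
    using join_meets_line[OF T nc K L y False w1(1) w2(1) w2(3)[symmetric]] w1 w2 by blast
  have wX: "w \<in> X" using w(1) L(1) line_subset_X by blast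
  have "w \<notin> ?K"
    using lines_eq[OF K(1) L(1) left_mem_line[OF zX abp(3)] _ z w(1)] w(2) abp(5)
      right_mem_line[OF zX abp(3)] by auto
  then have "line u w = line y w"
    using line_through_eq[OF yX wX u(1) right_mem_line[OF yX wX]] u(2) by auto
  then show ?thesis using u(2) w(1) left_mem_line[OF yX wX] by auto
qed

lemma triangle_playfair_fhull_insert_subset:
  assumes T: triangle_playfair and Lg: "long3 Ls"
    and A: "A \<subseteq> X" "finite A" "card A < 3" and z: "z \<in> fhull A" and p: "p \<in> X" "p \<notin> fhull A"
  shows "fhull (insert p A) \<subseteq> (\<Union>u\<in>line z p. \<Union>a\<in>fhull A. line u a)"
proof -
  have "card A = 0 \<or> card A = 1 \<or> card A = 2" using A(3) by linarith
  then consider "A = {}" | a where "A = {a}" | a b where "a \<noteq> b" "A = {a, b}"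
    using A(2) by (auto simp: card_1_singleton_iff card_2_iff)
  then show ?thesis
  proof cases
    case 1
    then show ?thesis using z fhull_empty by simp
  next
    case (2 a)
    have aX: "a \<in> X" using A(1) 2 by simp
    have "z = a" using z 2 fhull_singleton[OF aX] by simp
    have "fhull (insert p A) = line z p"
      using 2 fhull_pair[OF p(1) aX] \<open>z = a\<close> line_through_commute[of Ls p a] by simp
    moreover have "y \<in> line y a" if "y \<in> line z p" for y
      using left_mem_line[OF _ aX] that line_through_subset_X[OF aX p(1)] \<open>z = a\<close> by blast
    ultimately show ?thesis using 2 fhull_singleton[OF aX] by auto
  next
    case (3 a b)
    have abX: "a \<in> X" "b \<in> X" using A(1) 3 by auto
    have "fhull A = line a b" using 3 fhull_pair[OF abX] by simp
    moreover have "noncollinear a b p" using noncollinearI[OF abX p(1) 3(1)] p(2) calculation by simp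
    ultimately show ?thesis
      using triangle_playfair_join_cover[OF T Lg] z 3(2) by (auto simp: insert_commute)
  qed
qed

lemma triangle_playfair_regular3:
  assumes T: triangle_playfair and Lg: "long3 Ls"
  shows "regular3 X Ls"
  unfolding regular3_def
proof (intro allI impI)
  fix A z p assume "A \<subseteq> X \<and> finite A \<and> card A < 3 \<and> z \<in> fhull A \<and> p \<in> X - fhull A"
  then show "fhull (insert p A) = (\<Union>u\<in>line z p. \<Union>a\<in>fhull A. line u a)"
    using triangle_playfair_fhull_insert_subset[OF T Lg] joins_subset_fhull_insert by (simp add: subset_antisym)
qed

section \<open>Affinity, 3-regularity and 3-longness imply the parallel axiom\<close>

lemma affine_linerD:
  assumes "affine_liner X Ls" "z \<in> X" "x \<in> X" "y \<in> X" "p \<in> line x y" "p \<notin> line z x"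
  shows "\<exists>u\<in>line z y. \<forall>v\<in>line z y. (u = v \<longleftrightarrow> line v p \<inter> line z x = {})"
proof -
  have "p \<in> line x y - line z x" using assms(5,6) by simp
  then show ?thesis using assms(1-4) unfolding affine_liner_def by simp
qed

lemma affine_regular_parallel_point_unique:
  assumes A: "affine_liner X Ls" and R: "regular3 X Ls" and nc: "noncollinear z x y"
    and q: "q \<in> fhull {z, x, y}" "q \<notin> line z x" "q \<notin> line z y"
    and v: "v1 \<in> line z y" "v2 \<in> line z y" "line v1 q \<inter> line z x = {}" "line v2 q \<inter> line z x = {}"
  shows "v1 = v2"
proof -
  note zxy = noncollinearD[OF nc]
  obtain u w where u: "u \<in> line z y" and w: "w \<in> line z x" and quw: "q \<in> line u w"
    using regular3_decompose[OF R nc left_mem_line[OF zxy(1,2)] q(1)] by blast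
  have uX: "u \<in> X" and wX: "w \<in> X" using u w line_through_subset_X zxy by blast+
  have "u \<noteq> z"
    using quw q(2) flat_line_subset[OF flat_line_through[OF zxy(1,2)] left_mem_line[OF zxy(1,2)] w] by auto
  have "w \<noteq> z"
    using quw q(3) flat_line_subset[OF flat_line_through[OF zxy(1,3)] u left_mem_line[OF zxy(1,3)]] by auto
  have "line z w = line z x"
    using line_through_eq[OF zxy(1,2) left_mem_line[OF zxy(1,2)] w] \<open>w \<noteq> z\<close> by simp
  moreover have "line z u = line z y"
    using line_through_eq[OF zxy(1,3) left_mem_line[OF zxy(1,3)] u] \<open>u \<noteq> z\<close> by simp
  moreover have "q \<in> line w u" using quw line_through_commute[of Ls u w] by simp
  ultimately show ?thesis
    using affine_linerD[OF A zxy(1) wX uX] q(2) v by metis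
qed

lemma affine_long3_parallel_exists:
  assumes A: "affine_liner X Ls" and Lg: "long3 Ls" and nc: "noncollinear a b p"
  obtains \<Lambda> where "\<Lambda> \<in> Ls" "p \<in> \<Lambda>" "\<Lambda> \<subseteq> fhull {a, b, p}" "\<Lambda> \<inter> line a b = {}"
proof -
  note abp = noncollinearD[OF nc]
  have "b \<noteq> p" using noncollinear_distinct[OF nc] by simp
  obtain y where y: "y \<in> line b p" "y \<noteq> b" "y \<noteq> p"
    using long3_third_point[OF Lg line_through_in_Ls[OF abp(2,3) \<open>b \<noteq> p\<close>]] by blast
  have yX: "y \<in> X" using y(1) line_through_subset_X abp by blast
  have "line b y = line b p"
    using line_through_eq[OF abp(2,3) left_mem_line[OF abp(2,3)] y(1)] y(2) by simp
  then obtain u where u: "u \<in> line a y" and par: "line u p \<inter> line a b = {}"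
    using affine_linerD[OF A abp(1,2) yX _ abp(5)] right_mem_line[OF abp(2,3)] by auto
  have uX: "u \<in> X" using u line_through_subset_X[OF abp(1) yX] by blast
  have "u \<noteq> p"
  proof
    assume "u = p"
    then have "line p y = line a y"
      using line_through_eq[OF abp(1) yX _ right_mem_line[OF abp(1) yX]] u y(3) by metis
    moreover have "line p y = line b p"
      using line_through_eq[OF abp(2,3) right_mem_line[OF abp(2,3)] y(1)] y(3) by simp
    ultimately have "a \<in> line b p" using left_mem_line[OF abp(1) yX] by simp
    then show False
      using lines_meet_once[OF abp(2,1,3)] noncollinearD(5)[OF noncollinear_permute(1)[OF nc]]
        right_mem_line[OF abp(2,1)] abp(4) by blast
  qed
  have yH: "y \<in> fhull {a, b, p}" using noncollinear_side_subset_fhull(3)[OF nc] y(1) by blast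
  have "u \<in> fhull {a, b, p}"
    using noncollinear_line_subset_fhull[OF nc vertices_mem_fhull(1) yH] u by blast
  then have "line u p \<subseteq> fhull {a, b, p}"
    using noncollinear_line_subset_fhull[OF nc _ vertices_mem_fhull(3)] by blast
  then show thesis
    using that line_through_in_Ls[OF uX abp(3) \<open>u \<noteq> p\<close>] right_mem_line[OF uX abp(3)] par by blast
qed

lemma regular3_join_to_line:
  assumes R: "regular3 X Ls" and nc: "noncollinear a b p"
    and C: "C \<in> Ls" "p \<in> C" "C \<subseteq> fhull {a, b, p}" "C \<inter> line a b = {}"
    and d: "d \<in> fhull {a, b, p}" "d \<notin> C" "d \<notin> line a p"
  obtains u x where "u \<in> line a p" "u \<noteq> p" "x \<in> C" "x \<noteq> p" "d \<in> line u x"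
proof -
  note abp = noncollinearD[OF nc]
  obtain c where c: "c \<in> C" "c \<noteq> p" using line_other_point[OF C(1)] by blast
  have cX: "c \<in> X" using c(1) C(1) line_subset_X by blast
  have C_eq: "line p c = C" using line_through_unique[OF C(1,2) c(1)] c(2) by simp
  have "a \<notin> C" using C(4) left_mem_line[OF abp(1,2)] by blast
  then have nc': "noncollinear p c a" using noncollinearI[OF abp(3) cX abp(1)] c(2) C_eq by simp
  have "fhull {p, c, a} = fhull {a, b, p}"
    using fhull_noncollinear_eq[OF regular3_exchange[OF R] nc nc' vertices_mem_fhull(3)] c(1) C(3)
      vertices_mem_fhull(1) by blast
  then have "\<exists>u\<in>line p a. \<exists>x\<in>line p c. d \<in> line u x"
    using regular3_decompose[OF R nc' left_mem_line[OF abp(3) cX]] d(1) by simp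
  then obtain u x where u: "u \<in> line p a" and x: "x \<in> C" and dux: "d \<in> line u x"
    using C_eq by blast
  have ap: "line p a = line a p" using line_through_commute by metis
  have "u \<noteq> p" using dux d(2) flat_line_subset[OF flat_Ls[OF C(1)] C(2) x] by auto
  moreover have "x \<noteq> p"
    using dux d(3) line_through_eq[OF abp(3,1) u left_mem_line[OF abp(3,1)]] \<open>u \<noteq> p\<close> ap by auto
  ultimately show thesis using that u x dux ap by simp
qed

lemma affine_regular_parallel_transversal:
  assumes A: "affine_liner X Ls" and R: "regular3 X Ls" and nc: "noncollinear a b p"
    and C: "C \<in> Ls" "p \<in> C" "C \<inter> line a b = {}" and D: "D \<in> Ls" "p \<in> D" "D \<inter> line a b = {}"
    and x: "x \<in> C" "x \<noteq> p" "x \<in> fhull {a, b, p}" and d: "d \<in> D"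
    and z: "z \<in> line a b" "d \<in> line z x"
  shows "x = d"
proof -
  note abp = noncollinearD[OF nc]
  let ?L = "line a b"
  have L: "?L \<in> Ls" using line_through_in_Ls abp by simp
  obtain w where w: "w \<in> ?L" "w \<noteq> z" using line_other_point[OF L] by blast
  have zX: "z \<in> X" "w \<in> X" and xX: "x \<in> X"
    using z(1) w(1) x(1) C(1) line_subset_X line_through_subset_X abp by blast+
  have L_eq: "line z w = ?L" using line_through_unique[OF L z(1) w(1)] w(2) by simp
  have "x \<notin> ?L" "z \<noteq> x" using x(1) z(1) C(3) by blast+
  then have nc': "noncollinear z w x" using noncollinearI[OF zX xX] w(2) L_eq by simp
  have "fhull {z, w, x} = fhull {a, b, p}"
    using fhull_noncollinear_eq[OF regular3_exchange[OF R] nc nc'] z(1) w(1) x(3)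
      noncollinear_side_subset_fhull(1)[OF nc] by blast
  then have pH: "p \<in> fhull {z, w, x}" using vertices_mem_fhull(3) by simp
  have "p \<notin> line z x"
    using not_mem_line_through[OF C(1) x(1) C(2) x(2)[symmetric] zX(1) xX] C(3) z(1) by blast
  moreover have "line x p \<subseteq> C" "line d p \<subseteq> D"
    using flat_line_subset[OF flat_Ls] C D x(1) d by blast+
  ultimately show "x = d"
    using affine_regular_parallel_point_unique[OF A R nc' pH _ _ right_mem_line[OF zX(1) xX] z(2)]
      L_eq abp(5) C(3) D(3) by blast
qed

lemma affine_regular_parallel_unique:
  assumes A: "affine_liner X Ls" and R: "regular3 X Ls" and nc: "noncollinear a b p"
    and C: "C \<in> Ls" "p \<in> C" "C \<subseteq> fhull {a, b, p}" "C \<inter> line a b = {}"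
    and D: "D \<in> Ls" "p \<in> D" "D \<subseteq> fhull {a, b, p}" "D \<inter> line a b = {}"
  shows "C = D"
proof (rule ccontr)
  assume "C \<noteq> D"
  note abp = noncollinearD[OF nc]
  let ?L = "line a b"
  have "a \<in> ?L" using left_mem_line abp by simp
  then have "a \<notin> C" "a \<notin> D" using C(4) D(4) by blast+
  obtain d where d: "d \<in> D" "d \<noteq> p" using line_other_point[OF D(1)] by blast
  have "d \<notin> C" using lines_eq[OF C(1) D(1) C(2) _ D(2) d(1)] d(2) \<open>C \<noteq> D\<close> by blast
  moreover have "d \<notin> line a p" using not_mem_line_through[OF D(1,2) d abp(1,3) \<open>a \<notin> D\<close>] .
  ultimately obtain u x where u: "u \<in> line a p" "u \<noteq> p" and x: "x \<in> C" "x \<noteq> p"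
    and dux: "d \<in> line u x"
    using regular3_join_to_line[OF R nc C] d(1) D(3) by blast
  have uX: "u \<in> X" and xX: "x \<in> X" using u(1) x(1) C(1) line_subset_X line_through_subset_X abp by blast+
  have xH: "x \<in> fhull {a, b, p}" and "x \<notin> ?L" using x(1) C(3,4) by blast+
  \<comment> \<open>If ux misses ab, then p and u are two points of ap joined to x by parallels of ab, against
    affinity; otherwise ux is a transversal of C and D meeting ab.\<close>
  show False
  proof (cases "line u x \<inter> ?L = {}")
    case True
    have "line x p = C" using line_through_unique[OF C(1) x(1) C(2) x(2)] .
    moreover have "x \<notin> line a p" using not_mem_line_through[OF C(1,2) x abp(1,3) \<open>a \<notin> C\<close>] .
    ultimately have "p = u"
      using affine_regular_parallel_point_unique[OF A R nc xH \<open>x \<notin> ?L\<close> _ right_mem_line[OF abp(1,3)] u(1)]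
        C(4) True by (simp add: line_through_commute)
    then show False using u(2) by simp
  next
    case False
    then obtain z where z: "z \<in> line u x" "z \<in> ?L" by blast
    have "z \<noteq> x" using z(2) \<open>x \<notin> ?L\<close> by blast
    then have "line z x = line u x"
      using line_through_eq[OF uX xX z(1) right_mem_line[OF uX xX]] by simp
    then have "x = d"
      using affine_regular_parallel_transversal[OF A R nc C(1,2,4) D(1,2,4) x xH d(1) z(2)] dux by simp
    then show False using x(1) \<open>d \<notin> C\<close> by simp
  qed
qed

lemma affine_regular_long3_triangle_playfair:
  assumes A: "affine_liner X Ls" and R: "regular3 X Ls" and Lg: "long3 Ls"
  shows triangle_playfair
  unfolding triangle_playfair_def
proof (intro allI impI)
  fix a b c assume nc: "noncollinear a b c"
  obtain \<Lambda> where \<Lambda>: "\<Lambda> \<in> Ls" "c \<in> \<Lambda>" "\<Lambda> \<subseteq> fhull {a, b, c}" "\<Lambda> \<inter> line a b = {}"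
    using affine_long3_parallel_exists[OF A Lg nc] .
  show "\<exists>!\<Lambda>. \<Lambda> \<in> Ls \<and> c \<in> \<Lambda> \<and> \<Lambda> \<subseteq> fhull {a, b, c} - line a b"
  proof (rule ex1I[of _ \<Lambda>])
    show "\<Lambda> \<in> Ls \<and> c \<in> \<Lambda> \<and> \<Lambda> \<subseteq> fhull {a, b, c} - line a b" using \<Lambda> by blast
  next
    fix M assume M: "M \<in> Ls \<and> c \<in> M \<and> M \<subseteq> fhull {a, b, c} - line a b"
    then have "M \<subseteq> fhull {a, b, c}" "M \<inter> line a b = {}" by auto
    then show "M = \<Lambda>" using affine_regular_parallel_unique[OF A R nc _ _ _ _ \<Lambda>] M by blast
  qed
qed

section \<open>Planes\<close>

lemma collinear_cases:
  assumes "a \<in> X" "b \<in> X" "c \<in> X"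
  obtains "noncollinear a b c" | u v where "u \<in> X" "v \<in> X" "{a, b, c} \<subseteq> line u v"
proof (cases "a = b \<or> c \<in> line a b")
  case True
  then show thesis
    using that(2)[of a c] that(2)[of a b] assms left_mem_line right_mem_line by blast
qed (use that(1) noncollinearI assms in blast)

lemma noncollinear_not_in_small_fhull:
  assumes B: "B \<subseteq> X" "finite B" "card B < 3" and nc: "noncollinear a b c"
  shows "\<not> {a, b, c} \<subseteq> fhull B"
proof
  assume abc: "{a, b, c} \<subseteq> fhull B"
  have "card B = 0 \<or> card B = 1 \<or> card B = 2" using B(3) by linarith
  then consider "B = {}" | u where "B = {u}" | u v where "B = {u, v}"
    using B(2) by (auto simp: card_1_singleton_iff card_2_iff)
  then show False
  proof cases
    case 1
    then show False using abc fhull_empty by simp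
  next
    case (2 u)
    then show False using abc fhull_singleton B(1) noncollinear_distinct[OF nc] by auto
  next
    case (3 u v)
    then have uv: "u \<in> X" "v \<in> X" using B(1) by auto
    then have "{a, b, c} \<subseteq> line u v" using abc fhull_pair 3 by simp
    then have "line a b = line u v" using line_through_eq[OF uv] noncollinearD(4)[OF nc] by simp
    then show False using \<open>{a, b, c} \<subseteq> line u v\<close> noncollinearD(5)[OF nc] by simp
  qed
qed

lemma rank_fhull_noncollinear:
  assumes nc: "noncollinear a b c"
  shows "rank X Ls (fhull {a, b, c}) = 3"
proof -
  have abc: "{a, b, c} \<subseteq> X" "card {a, b, c} = 3"
    using noncollinear_subset_X[OF nc] noncollinear_distinct[OF nc] by auto
  have "(LEAST n. \<exists>B. B \<subseteq> X \<and> finite B \<and> card B = n \<and> fhull {a, b, c} \<subseteq> fhull B) = 3"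
  proof (rule Least_equality)
    show "\<exists>B. B \<subseteq> X \<and> finite B \<and> card B = 3 \<and> fhull {a, b, c} \<subseteq> fhull B"
      using abc by (intro exI[of _ "{a, b, c}"]) simp
  next
    fix m assume "\<exists>B. B \<subseteq> X \<and> finite B \<and> card B = m \<and> fhull {a, b, c} \<subseteq> fhull B"
    then obtain B where B: "B \<subseteq> X" "finite B" "card B = m" "{a, b, c} \<subseteq> fhull B"
      using fhull_superset[of "{a, b, c}"] by blast
    show "3 \<le> m"
    proof (rule ccontr)
      assume "\<not> 3 \<le> m"
      then show False using noncollinear_not_in_small_fhull[OF B(1,2) _ nc] B(3,4) by simp
    qed
  qed
  moreover have "\<exists>B. B \<subseteq> X \<and> finite B \<and> fhull {a, b, c} \<subseteq> fhull B"
    using abc(1) by (intro exI[of _ "{a, b, c}"]) simp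
  ultimately show ?thesis unfolding rank_def by (simp add: numeral_eq_enat)
qed

lemma plane_spanning_triple:
  assumes "plane X Ls P"
  obtains a b c where "a \<in> X" "b \<in> X" "c \<in> X" "P \<subseteq> fhull {a, b, c}"
proof -
  have rank: "rank X Ls P = 3" using assms unfolding plane_def by simp
  then have ex: "\<exists>n B. B \<subseteq> X \<and> finite B \<and> card B = n \<and> P \<subseteq> fhull B"
    unfolding rank_def by (auto split: if_splits)
  then have "enat (LEAST n. \<exists>B. B \<subseteq> X \<and> finite B \<and> card B = n \<and> P \<subseteq> fhull B) = 3"
    using rank unfolding rank_def by auto
  then have "(LEAST n. \<exists>B. B \<subseteq> X \<and> finite B \<and> card B = n \<and> P \<subseteq> fhull B) = 3"
    by (simp add: numeral_eq_enat)
  then obtain B where "B \<subseteq> X" "card B = 3" "P \<subseteq> fhull B"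
    using LeastI_ex[OF ex] by auto
  then show thesis using that by (auto simp: card_3_iff)
qed

lemma plane_eq_fhull_line_insert:
  assumes E: plane_exchange and P: "plane X Ls P" and L: "L \<in> Ls" "L \<subseteq> P" and x: "x \<in> P" "x \<notin> L"
  shows "P = fhull (L \<union> {x})"
proof -
  have flat: "flat X Ls P" using P unfolding plane_def by simp
  have xX: "x \<in> X" using x(1) flat unfolding flat_def by blast
  obtain l1 l2 where l: "line l1 l2 = L" "noncollinear l1 l2 x"
    using noncollinear_on_line[OF L(1) xX x(2)] .
  have lX: "l1 \<in> X" "l2 \<in> X" using noncollinearD[OF l(2)] by simp_all
  have lP: "{l1, l2, x} \<subseteq> P" using l(1) left_mem_line[OF lX] right_mem_line[OF lX] L(2) x(1) by auto
  obtain a b c where abc: "a \<in> X" "b \<in> X" "c \<in> X" "P \<subseteq> fhull {a, b, c}"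
    using plane_spanning_triple[OF P] .
  have "noncollinear a b c"
  proof (cases rule: collinear_cases[OF abc(1-3)])
    case (2 u v)
    have "card {u, v} < 3" by (cases "u = v") auto
    then have "\<not> {l1, l2, x} \<subseteq> line u v"
      using noncollinear_not_in_small_fhull[of "{u, v}", OF _ _ _ l(2)] 2(1,2) fhull_pair[OF 2(1,2)] by simp
    moreover have "fhull {a, b, c} \<subseteq> line u v" using fhull_least[OF flat_line_through] 2 by blast
    ultimately show ?thesis using lP abc(4) by blast
  qed
  then have "fhull {l1, l2, x} = fhull {a, b, c}"
    using fhull_noncollinear_eq[OF E _ l(2)] lP abc(4) by blast
  then have "P = fhull {l1, l2, x}" using fhull_least[OF flat lP] abc(4) by blast
  then show ?thesis using fhull_line_insert[OF lX xX] l(1) by simp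
qed

lemma playfair_iff_triangle_playfair: "playfair X Ls \<longleftrightarrow> triangle_playfair"
proof
  assume PL: "playfair X Ls"
  show triangle_playfair
    unfolding triangle_playfair_def
  proof (intro allI impI)
    fix a b c assume nc: "noncollinear a b c"
    have "plane X Ls (fhull {a, b, c})"
      unfolding plane_def using flat_fhull[OF noncollinear_subset_X[OF nc]] rank_fhull_noncollinear[OF nc]
      by simp
    moreover have "line a b \<in> Ls" "c \<in> fhull {a, b, c} - line a b"
      using noncollinearD[OF nc] line_through_in_Ls vertices_mem_fhull(3) by simp_all
    ultimately show "\<exists>!\<Lambda>. \<Lambda> \<in> Ls \<and> c \<in> \<Lambda> \<and> \<Lambda> \<subseteq> fhull {a, b, c} - line a b"
      using PL[unfolded playfair_def, rule_format, of "fhull {a, b, c}" "line a b" c]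
        noncollinear_side_subset_fhull(1)[OF nc] by blast
  qed
next
  assume T: triangle_playfair
  show "playfair X Ls"
    unfolding playfair_def
  proof (intro allI impI)
    fix P L x assume h: "plane X Ls P \<and> L \<in> Ls \<and> L \<subseteq> P \<and> x \<in> P - L"
    then have "P = fhull (L \<union> {x})" and "x \<in> X"
      using plane_eq_fhull_line_insert[OF triangle_playfair_exchange[OF T]]
      unfolding plane_def flat_def by blast+
    then show "\<exists>!\<Lambda>. \<Lambda> \<in> Ls \<and> x \<in> \<Lambda> \<and> \<Lambda> \<subseteq> P - L"
      using T[unfolded triangle_playfair_iff_parallels] h by simp
  qed
qed

end

theorem theorem3p7p2:
  fixes X :: "'a set" and Ls :: "'a set set"
  assumes "liner X Ls"
    and "infinite X \<or> card X > 2"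
  shows "(playfair X Ls \<longleftrightarrow> affine_liner X Ls \<and> regular3 X Ls \<and> long3 Ls)
       \<and> (affine_liner X Ls \<and> regular3 X Ls \<and> long3 Ls \<longleftrightarrow>
          (\<forall>L\<in>Ls. \<forall>x\<in>X - L. \<exists>!\<Lambda>. \<Lambda> \<in> Ls \<and> x \<in> \<Lambda> \<and>
              \<Lambda> \<subseteq> flat_hull X Ls (L \<union> {x}) - L))"
proof -
  interpret liner_geometry X Ls by unfold_locales (rule assms(1))
  have "triangle_playfair \<longleftrightarrow> affine_liner X Ls \<and> regular3 X Ls \<and> long3 Ls"
    using triangle_playfair_affine triangle_playfair_long3[OF _ assms(2)] triangle_playfair_regular3
      affine_regular_long3_triangle_playfair by blast
  then show ?thesis using playfair_iff_triangle_playfair triangle_playfair_iff_parallels by simp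
qed

end
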